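(* For every positive integer $n$, the Aztec diamond $\operatorname{AD}(n)$ has no 180-cover.
   Context: A cell is a unit square $[i,i+1]\times[j,j+1]$ with $i,j\in\mathbb{Z}$, labelled $(i,j)$. The right-oriented trominoes are the translates of $\{(0,0),(1,0),(1,1)\}$ and of $\{(0,0),(0,1),(1,1)\}$; the left-oriented trominoes are the translates of $\{(0,1),(1,0),(1,1)\}$ and of $\{(0,0),(0,1),(1,0)\}$. A 180-cover of a region $R$ is a partition of $R$ into trominoes which are either all right-oriented or all left-oriented. The Aztec diamond $\operatorname{AD}(n)$ is the union of the cells $[a,a+1]\times[b,b+1]$, $a,b\in\mathbb{Z}$, lying completely inside $\{(x,y): |x|+|y|\le n+1\}$. *)

theory Defs
  imports Complex_Main
begin

type_synonym cell = "int \<times> int"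

definition translate :: "cell \<Rightarrow> cell set \<Rightarrow> cell set" where
  "translate v S = (\<lambda>(x, y). (x + fst v, y + snd v)) ` S"

definition right_tromino :: "cell set \<Rightarrow> bool" where
  "right_tromino t \<longleftrightarrow> (\<exists>v. t = translate v {(0,0),(1,0),(1,1)} \<or> t = translate v {(0,0),(0,1),(1,1)})"

definition left_tromino :: "cell set \<Rightarrow> bool" where
  "left_tromino t \<longleftrightarrow> (\<exists>v. t = translate v {(0,1),(1,0),(1,1)} \<or> t = translate v {(0,0),(0,1),(1,0)})"

definition is_partition :: "cell set \<Rightarrow> cell set set \<Rightarrow> bool" where
  "is_partition R T \<longleftrightarrow> \<Union>T = R \<and> (\<forall>t\<in>T. \<forall>t'\<in>T. t \<noteq> t' \<longrightarrow> t \<inter> t' = {})"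

definition cover180 :: "cell set \<Rightarrow> bool" where
  "cover180 R \<longleftrightarrow> (\<exists>T. is_partition R T \<and>
      ((\<forall>t\<in>T. right_tromino t) \<or> (\<forall>t\<in>T. left_tromino t)))"

text \<open>Cell (a,b) is the unit square [a,a+1] x [b,b+1]; AD(n) consists of cells lying
  completely inside |x|+|y| <= n+1.\<close>
definition aztec_diamond :: "nat \<Rightarrow> cell set" where
  "aztec_diamond n = {(a, b). \<forall>x y :: real.
      real_of_int a \<le> x \<and> x \<le> real_of_int a + 1 \<and> real_of_int b \<le> y \<and> y \<le> real_of_int b + 1
      \<longrightarrow> \<bar>x\<bar> + \<bar>y\<bar> \<le> real n + 1}"

end

theory Submission
  imports Defs
begin

text \<open>Give the cell \<open>(a, b)\<close> the weight \<open>w (a + b)\<close> with \<open>w s = s mod 3 - (s + 1) mod 3\<close>.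
  A right tromino covers three consecutive values of \<open>a + b\<close>, so its weight telescopes to 0,
  and the mirror \<open>b \<mapsto> -1 - b\<close>, which fixes the Aztec diamond, turns a left-oriented cover
  into a right-oriented one. Summing the telescoping weights column by column, the weight of
  \<open>AD(n)\<close> is \<open>2 n\<close>, \<open>2\<close> or \<open>-2 (n + 1)\<close> according as \<open>n \<equiv> 0, 1, 2 (mod 3)\<close>, never 0.\<close>

definition weight :: "int \<Rightarrow> int" where
  "weight s = s mod 3 - (s + 1) mod 3"

lemma sum_weight_interval:
  assumes "lo \<le> hi"
  shows "(\<Sum>a\<in>{lo..<hi}. weight (a + c)) = (lo + c) mod 3 - (hi + c) mod 3"
  using assms
proof (induction hi rule: int_ge_induct)
  case (step i)
  have "{lo..<i + 1} = insert i {lo..<i}"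
    using step.hyps by auto
  then show ?case
    using step.IH by (simp add: weight_def algebra_simps)
qed simp

lemma weight_three_consecutive: "weight s + weight (s + 1) + weight (s + 2) = 0"
  by (simp add: weight_def algebra_simps)

lemma right_tromino_weight:
  assumes "right_tromino t"
  shows "(\<Sum>(a, b)\<in>t. weight (a + b)) = 0"
proof -
  from assms obtain x y where
    "t = {(x, y), (x + 1, y), (x + 1, y + 1)} \<or> t = {(x, y), (x, y + 1), (x + 1, y + 1)}"
    unfolding right_tromino_def translate_def by (auto simp: add.commute)
  moreover have "weight (x + y) + (weight (x + y + 1) + weight (x + y + 2)) = 0"
    using weight_three_consecutive[of "x + y"] by simp
  ultimately show ?thesis
    by (auto simp: ac_simps)
qed

lemma sum_partition:
  assumes "is_partition R T" and "finite R"
  shows "sum f R = (\<Sum>t\<in>T. sum f t)"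
proof -
  have R: "R = \<Union>T" and disjoint: "\<forall>t\<in>T. \<forall>t'\<in>T. t \<noteq> t' \<longrightarrow> t \<inter> t' = {}"
    using assms(1) unfolding is_partition_def by auto
  have "finite T"
    using assms(2) unfolding R by (rule finite_UnionD)
  moreover have "\<forall>t\<in>T. finite t"
    using assms(2) unfolding R by (meson Union_upper finite_subset)
  ultimately show ?thesis
    unfolding R using sum.Union_disjoint[of T f] disjoint by (simp add: comp_def)
qed

lemma right_partition_weight:
  assumes "is_partition R T" and "finite R" and "\<forall>t\<in>T. right_tromino t"
  shows "(\<Sum>(a, b)\<in>R. weight (a + b)) = 0"
proof -
  have "(\<Sum>(a, b)\<in>R. weight (a + b)) = (\<Sum>t\<in>T. \<Sum>(a, b)\<in>t. weight (a + b))"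
    by (rule sum_partition[OF assms(1,2)])
  also have "\<dots> = 0"
    using assms(3) right_tromino_weight by simp
  finally show ?thesis .
qed

definition mirror :: "cell \<Rightarrow> cell" where
  "mirror = (\<lambda>(a, b). (a, -1 - b))"

lemma mirror_mirror [simp]: "mirror (mirror c) = c"
  by (simp add: mirror_def split: prod.splits)

lemma inj_mirror: "inj mirror"
  by (metis injI mirror_mirror)

lemma right_tromino_mirror:
  assumes "left_tromino t"
  shows "right_tromino (mirror ` t)"
proof -
  from assms obtain x y where
    "t = translate (x, y) {(0,1),(1,0),(1,1)} \<or> t = translate (x, y) {(0,0),(0,1),(1,0)}"
    unfolding left_tromino_def by auto
  then have "mirror ` t = translate (x, -2 - y) {(0,0),(1,0),(1,1)}
      \<or> mirror ` t = translate (x, -2 - y) {(0,0),(0,1),(1,1)}"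
    by (auto simp: translate_def mirror_def insert_commute)
  then show ?thesis
    unfolding right_tromino_def by blast
qed

lemma is_partition_image:
  assumes "is_partition R T" and "inj f"
  shows "is_partition (f ` R) ((`) f ` T)"
  using assms unfolding is_partition_def by (auto simp: inj_image_eq_iff image_Int[symmetric])

lemma cover180_imp_right_partition:
  assumes "cover180 R" and "mirror ` R = R"
  obtains T where "is_partition R T" and "\<forall>t\<in>T. right_tromino t"
proof -
  from assms(1) obtain T where T: "is_partition R T"
    and orient: "(\<forall>t\<in>T. right_tromino t) \<or> (\<forall>t\<in>T. left_tromino t)"
    unfolding cover180_def by blast
  show thesis
  proof (cases "\<forall>t\<in>T. right_tromino t")
    case True
    with T that show thesis by blast
  next
    case False
    with orient have "\<forall>t\<in>(`) mirror ` T. right_tromino t"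
      using right_tromino_mirror by auto
    moreover have "is_partition R ((`) mirror ` T)"
      using is_partition_image[OF T inj_mirror] assms(2) by simp
    ultimately show thesis
      using that by blast
  qed
qed

lemma sum_lessThan_add_shift:
  fixes m n :: nat
  shows "(\<Sum>i<m + n. f i) = (\<Sum>i<m. f i) + (\<Sum>i<n. f (i + m))"
proof -
  have "(\<Sum>i<m + n. f i) = (\<Sum>i\<in>{0..<m}. f i) + (\<Sum>i\<in>{m..<m + n}. f i)"
    using sum.atLeastLessThan_concat[of 0 m "m + n" f] by (simp add: atLeast0LessThan)
  also have "(\<Sum>i\<in>{m..<m + n}. f i) = (\<Sum>i<n. f (i + m))"
    using sum.shift_bounds_nat_ivl[of f 0 m n] by (simp add: atLeast0LessThan add.commute)
  finally show ?thesis by (simp add: atLeast0LessThan)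
qed

lemma sum_lessThan_periodic:
  fixes f :: "nat \<Rightarrow> 'a::comm_semiring_1"
  assumes "\<And>i. f (i + p) = f i"
  shows "(\<Sum>i<k * p + r. f i) = of_nat k * (\<Sum>i<p. f i) + (\<Sum>i<r. f i)"
proof (induction k)
  case (Suc k)
  have "(\<Sum>i<Suc k * p + r. f i) = (\<Sum>i<p. f i) + (\<Sum>i<k * p + r. f (i + p))"
    by (simp add: sum_lessThan_add_shift add.assoc)
  then show ?case
    using Suc.IH by (simp add: assms algebra_simps)
qed simp

text \<open>The largest \<open>\<bar>x\<bar>\<close> over the span \<open>[a, a + 1]\<close> of a cell.\<close>

definition extent :: "int \<Rightarrow> int" where
  "extent a = max (a + 1) (- a)"

lemma abs_le_extent:
  assumes "real_of_int a \<le> x" and "x \<le> real_of_int a + 1"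
  shows "\<bar>x\<bar> \<le> real_of_int (extent a)"
  using assms by (auto simp: extent_def)

lemma extent_attained: "\<exists>x. a \<le> x \<and> x \<le> a + 1 \<and> \<bar>x\<bar> = extent a"
  by (cases "a \<ge> 0") (auto simp: extent_def intro: exI[of _ "a + 1"] exI[of _ a])

lemma aztec_diamond_iff:
  "(a, b) \<in> aztec_diamond n \<longleftrightarrow> extent a + extent b \<le> int n + 1"
proof
  assume "(a, b) \<in> aztec_diamond n"
  moreover obtain x y where
    "a \<le> x" "x \<le> a + 1" "\<bar>x\<bar> = extent a" "b \<le> y" "y \<le> b + 1" "\<bar>y\<bar> = extent b"
    using extent_attained by meson
  ultimately have "\<bar>real_of_int x\<bar> + \<bar>real_of_int y\<bar> \<le> real n + 1"
    unfolding aztec_diamond_def by auto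
  then show "extent a + extent b \<le> int n + 1"
    using \<open>\<bar>x\<bar> = extent a\<close> \<open>\<bar>y\<bar> = extent b\<close> by linarith
next
  assume "extent a + extent b \<le> int n + 1"
  then have "real_of_int (extent a) + real_of_int (extent b) \<le> real n + 1"
    by linarith
  then show "(a, b) \<in> aztec_diamond n"
    unfolding aztec_diamond_def
    using abs_le_extent[of a] abs_le_extent[of b] by fastforce
qed

lemma aztec_diamond_columns:
  "aztec_diamond n = (SIGMA a:{- int n..<int n}. {extent a - int n - 1..<int n + 1 - extent a})"
  by (auto simp: aztec_diamond_iff extent_def)

lemma finite_aztec_diamond: "finite (aztec_diamond n)"
  unfolding aztec_diamond_columns by auto

lemma mirror_aztec_diamond: "mirror ` aztec_diamond n = aztec_diamond n"
proof -
  have mirror_mem: "mirror c \<in> aztec_diamond n \<longleftrightarrow> c \<in> aztec_diamond n" for c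
    by (cases c) (simp add: mirror_def aztec_diamond_iff extent_def max.commute)
  show ?thesis
  proof
    show "mirror ` aztec_diamond n \<subseteq> aztec_diamond n"
      using mirror_mem by (simp add: image_subset_iff)
    show "aztec_diamond n \<subseteq> mirror ` aztec_diamond n"
      using mirror_mem by (metis mirror_mirror rev_image_eqI subsetI)
  qed
qed

lemma mod3_minus_one_minus: "(-1 - x) mod 3 = 2 - x mod (3::int)"
  by presburger

lemma aztec_diamond_weight:
  "(\<Sum>(a, b)\<in>aztec_diamond n. weight (a + b)) =
     2 * (\<Sum>i<n. (2 * int i - int n) mod 3 - int n mod 3)"
proof -
  define column where
    "column a = (extent a - int n - 1 + a) mod 3 - (int n + 1 - extent a + a) mod 3" for a
  have column_sum:
    "(\<Sum>b\<in>{extent a - int n - 1..<int n + 1 - extent a}. weight (b + a)) = column a"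
    if "a \<in> {- int n..<int n}" for a
  proof -
    have "extent a - int n - 1 \<le> int n + 1 - extent a"
      using that by (auto simp: extent_def max_def)
    then show ?thesis
      unfolding column_def by (rule sum_weight_interval)
  qed
  have column_mirror: "column (-1 - a) = column a" for a
  proof -
    have "extent (-1 - a) = extent a"
      by (simp add: extent_def max.commute)
    moreover have "extent a - int n - 1 + (-1 - a) = -1 - (int n + 1 - extent a + a)"
      and "int n + 1 - extent a + (-1 - a) = -1 - (extent a - int n - 1 + a)"
      by simp_all
    ultimately show ?thesis
      unfolding column_def by (simp only: mod3_minus_one_minus)
  qed
  have "(\<Sum>(a, b)\<in>aztec_diamond n. weight (a + b)) =
      (\<Sum>a\<in>{- int n..<int n}. \<Sum>b\<in>{extent a - int n - 1..<int n + 1 - extent a}. weight (a + b))"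
    unfolding aztec_diamond_columns by (rule sum.Sigma[symmetric]) auto
  also have "\<dots> = (\<Sum>a\<in>{- int n..<int n}. column a)"
    using column_sum by (simp add: add.commute)
  also have "\<dots> = (\<Sum>a\<in>{- int n..<0}. column a) + (\<Sum>a\<in>{0..<int n}. column a)"
  proof -
    have "{- int n..<int n} = {- int n..<0} \<union> {0..<int n}"
      by auto
    then show ?thesis
      by (simp add: sum.union_disjoint)
  qed
  also have "(\<Sum>a\<in>{- int n..<0}. column a) = (\<Sum>a\<in>{0..<int n}. column a)"
    by (rule sum.reindex_bij_witness[of _ "\<lambda>a. -1 - a" "\<lambda>a. -1 - a"]) (auto simp: column_mirror)
  also have "(\<Sum>a\<in>{0..<int n}. column a) = (\<Sum>i<n. (2 * int i - int n) mod 3 - int n mod 3)"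
    using sum.atLeast_int_lessThan_int_shift[of column 0 n]
    by (simp add: column_def extent_def atLeast0LessThan)
  finally show ?thesis
    by simp
qed

lemma aztec_column_sum_nonzero:
  assumes "n \<ge> 1"
  shows "(\<Sum>i<n. (2 * int i - int n) mod 3 - int n mod 3) \<noteq> 0"
proof -
  define k r where "k = n div 3" and "r = n mod 3"
  define f where "f i = (2 * int i - int r) mod 3 - int r" for i
  have "n = k * 3 + r"
    by (simp add: k_def r_def)
  then have n: "int n = 3 * int k + int r"
    by simp
  have "r < 3" and "k \<ge> 1 \<or> r \<noteq> 0"
    using assms by (auto simp: k_def r_def)
  have "int n mod 3 = int r"
    using \<open>r < 3\<close> unfolding n by simp
  moreover have "(2 * int i - int n) mod 3 = (2 * int i - int r) mod 3" for i
  proof -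
    have "2 * int i - int n = (2 * int i - int r) + (- int k) * 3"
      unfolding n by simp
    then show ?thesis
      by (simp only: mod_mult_self1)
  qed
  ultimately have "(2 * int i - int n) mod 3 - int n mod 3 = f i" for i
    unfolding f_def by simp
  then have "(\<Sum>i<n. (2 * int i - int n) mod 3 - int n mod 3) = (\<Sum>i<k * 3 + r. f i)"
    using \<open>n = k * 3 + r\<close> by simp
  also have "\<dots> = int k * (\<Sum>i<3. f i) + (\<Sum>i<r. f i)"
  proof (rule sum_lessThan_periodic)
    fix i
    have "2 * int (i + 3) - int r = (2 * int i - int r) + 2 * 3"
      by simp
    then show "f (i + 3) = f i"
      unfolding f_def by (simp only: mod_mult_self1)
  qed
  also have "\<dots> \<noteq> 0"
  proof -
    from \<open>r < 3\<close> consider "r = 0" | "r = 1" | "r = 2"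
      by linarith
    then show ?thesis
      using \<open>k \<ge> 1 \<or> r \<noteq> 0\<close> by cases (simp_all add: f_def numeral_3_eq_3 numeral_2_eq_2)
  qed
  finally show ?thesis .
qed

theorem corollary5:
  fixes n :: nat
  assumes "n \<ge> 1"
  shows "\<not> cover180 (aztec_diamond n)"
proof
  assume "cover180 (aztec_diamond n)"
  then obtain T where "is_partition (aztec_diamond n) T" and "\<forall>t\<in>T. right_tromino t"
    using cover180_imp_right_partition mirror_aztec_diamond by metis
  then have "(\<Sum>(a, b)\<in>aztec_diamond n. weight (a + b)) = 0"
    using right_partition_weight finite_aztec_diamond by blast
  then show False
    using aztec_diamond_weight aztec_column_sum_nonzero[OF assms] by simp
qed

end
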